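(* Let $A$ be a commutative ring with $1\ne0$ and let $|$ be a divisibility on $A$ that has cancellation. Then the support $I(|)$ is a prime ideal of $A$.
   Context: A divisibility on $A$ is a binary relation $|\subseteq A\times A$ such that for all $a,b,c\in A$: (1) $a|a$; (2) $a|b,\ b|c\Rightarrow a|c$; (3) $a|b,\ a|c\Rightarrow a|b-c$; (4) $a|b\Rightarrow ac|bc$; (5) $0\nmid 1$. Its support is $I(|)=\{a\in A;\ 0|a\}$ (a proper ideal). $|$ has cancellation if for all $c\in A$ with $0\nmid c$ and all $a,b\in A$, $ac|bc$ implies $a|b$. *)

theory Defs
  imports "HOL-Algebra.Algebra"
begin

definition divisibility :: "('a, 'b) ring_scheme \<Rightarrow> ('a \<Rightarrow> 'a \<Rightarrow> bool) \<Rightarrow> bool" where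
  "divisibility R d \<longleftrightarrow>
     (\<forall>a \<in> carrier R. d a a) \<and>
     (\<forall>a \<in> carrier R. \<forall>b \<in> carrier R. \<forall>c \<in> carrier R. d a b \<and> d b c \<longrightarrow> d a c) \<and>
     (\<forall>a \<in> carrier R. \<forall>b \<in> carrier R. \<forall>c \<in> carrier R. d a b \<and> d a c \<longrightarrow> d a (b \<ominus>\<^bsub>R\<^esub> c)) \<and>
     (\<forall>a \<in> carrier R. \<forall>b \<in> carrier R. \<forall>c \<in> carrier R. d a b \<longrightarrow> d (a \<otimes>\<^bsub>R\<^esub> c) (b \<otimes>\<^bsub>R\<^esub> c)) \<and>
     \<not> d \<zero>\<^bsub>R\<^esub> \<one>\<^bsub>R\<^esub>"

definition div_support :: "('a, 'b) ring_scheme \<Rightarrow> ('a \<Rightarrow> 'a \<Rightarrow> bool) \<Rightarrow> 'a set" where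
  "div_support R d = {a \<in> carrier R. d \<zero>\<^bsub>R\<^esub> a}"

definition has_cancellation :: "('a, 'b) ring_scheme \<Rightarrow> ('a \<Rightarrow> 'a \<Rightarrow> bool) \<Rightarrow> bool" where
  "has_cancellation R d \<longleftrightarrow>
     (\<forall>c \<in> carrier R. \<not> d \<zero>\<^bsub>R\<^esub> c \<longrightarrow>
        (\<forall>a \<in> carrier R. \<forall>b \<in> carrier R. d (a \<otimes>\<^bsub>R\<^esub> c) (b \<otimes>\<^bsub>R\<^esub> c) \<longrightarrow> d a b))"

end

theory Submission
  imports Defs
begin

text \<open>The support is the class of 0 under the divisibility, so closure under subtraction and
  multiplication comes from axioms (3) and (4) applied with divisor 0, and properness from
  axiom (5). Primality is cancellation: if ab lies in the support and a does not, then
  0 b = 0 a divides b a, and cancelling a gives 0 | b.\<close>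

lemma div_support_iff: "x \<in> div_support R d \<longleftrightarrow> x \<in> carrier R \<and> d \<zero>\<^bsub>R\<^esub> x"
  unfolding div_support_def by simp

context ring
begin

lemma div_support_additive_subgroup:
  assumes "divisibility R d"
  shows "additive_subgroup (div_support R d) R"
proof -
  let ?I = "div_support R d"
  have refl: "\<And>a. a \<in> carrier R \<Longrightarrow> d a a"
    and sub: "\<And>a b c. \<lbrakk>a \<in> carrier R; b \<in> carrier R; c \<in> carrier R; d a b; d a c\<rbrakk>
                \<Longrightarrow> d a (b \<ominus> c)"
    using assms unfolding divisibility_def by blast+
  have diff_closed: "a \<ominus> b \<in> ?I" if "a \<in> ?I" "b \<in> ?I" for a b
    using sub[of \<zero> a b] that by (simp add: div_support_iff)
  have zero_mem: "\<zero> \<in> ?I"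
    using refl by (simp add: div_support_iff)
  have neg_closed: "\<ominus> a \<in> ?I" if "a \<in> ?I" for a
    using diff_closed[OF zero_mem that] that by (simp add: div_support_iff minus_eq)
  have add_closed: "a \<oplus> b \<in> ?I" if "a \<in> ?I" "b \<in> ?I" for a b
    using diff_closed[OF that(1) neg_closed[OF that(2)]] that
    by (simp add: div_support_iff minus_eq)
  show ?thesis
    unfolding additive_subgroup_def
  proof (rule add.subgroupI)
    show "div_support R d \<subseteq> carrier R"
      by (auto simp: div_support_iff)
  qed (use zero_mem neg_closed add_closed in auto)
qed

lemma div_support_ne_carrier:
  assumes "divisibility R d"
  shows "carrier R \<noteq> div_support R d"
proof
  assume "carrier R = div_support R d"
  then have "d \<zero> \<one>"
    using one_closed div_support_iff by metis
  with assms show False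
    unfolding divisibility_def by blast
qed

end

context cring
begin

lemma div_support_mult_closed:
  assumes "divisibility R d" and "a \<in> div_support R d" and "x \<in> carrier R"
  shows "a \<otimes> x \<in> div_support R d" and "x \<otimes> a \<in> div_support R d"
proof -
  have mult: "\<And>a b c. \<lbrakk>a \<in> carrier R; b \<in> carrier R; c \<in> carrier R; d a b\<rbrakk>
                \<Longrightarrow> d (a \<otimes> c) (b \<otimes> c)"
    using assms(1) unfolding divisibility_def by blast
  have "d (\<zero> \<otimes> x) (a \<otimes> x)"
    using mult[of \<zero> a x] assms(2,3) by (simp add: div_support_iff)
  then show "a \<otimes> x \<in> div_support R d"
    using assms(2,3) by (simp add: div_support_iff)
  then show "x \<otimes> a \<in> div_support R d"
    using assms(2,3) by (simp add: div_support_iff m_comm)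
qed

lemma div_support_prime:
  assumes "has_cancellation R d"
    and "a \<in> carrier R" "b \<in> carrier R" "a \<otimes> b \<in> div_support R d"
  shows "a \<in> div_support R d \<or> b \<in> div_support R d"
proof (cases "a \<in> div_support R d")
  case False
  then have "\<not> d \<zero> a"
    using assms(2) by (simp add: div_support_iff)
  moreover have "d (\<zero> \<otimes> a) (b \<otimes> a)"
    using assms(2-4) by (simp add: div_support_iff m_comm)
  ultimately have "d \<zero> b"
    using assms(1-3) zero_closed unfolding has_cancellation_def by blast
  then show ?thesis
    using assms(3) by (simp add: div_support_iff)
qed simp

end

theorem proposition2p1:
  fixes R :: "('a, 'b) ring_scheme" and d :: "'a \<Rightarrow> 'a \<Rightarrow> bool"
  assumes "cring R"
    and "\<one>\<^bsub>R\<^esub> \<noteq> \<zero>\<^bsub>R\<^esub>"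
    and "divisibility R d"
    and "has_cancellation R d"
  shows "primeideal (div_support R d) R"
proof -
  interpret cring R by (fact assms(1))
  show ?thesis
  proof (rule primeidealI2[OF div_support_additive_subgroup[OF assms(3)] is_cring])
    show "carrier R \<noteq> div_support R d"
      by (rule div_support_ne_carrier[OF assms(3)])
  qed (fact div_support_mult_closed[OF assms(3)] div_support_prime[OF assms(4)])+
qed

end
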